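(* Let $U\subset\mathbb{R}^2$ be open, $f,g:U\to\mathbb{R}$ smooth, and let $M\subset\mathbb{R}^{3,1}$ be the timelike surface parametrized by $\psi(x,y)=(f(x,y),g(x,y),x,y)$. Assume that $M$ has a canonical null direction with respect to both $e_3$ and $e_4$. Then $M$ is minimal if and only if $M$ can be locally parametrized as $$\psi(x,y)=\alpha(x)+\beta(y),$$ where $\alpha$ and $\beta$ are lightlike curves contained in the timelike hyperplanes orthogonal to $e_4$ and to $e_3$, respectively.
   Context: $\mathbb{R}^{3,1}$ is $\mathbb{R}^{4}$ with the metric $-dx_1^2+dx_2^2+dx_3^2+dx_4^2$, and $e_1,\dots,e_4$ is its canonical basis. A surface is timelike if the induced metric has signature $(1,1)$; a vector $v$ is lightlike if $v\ne0$ and $\langle v,v\rangle=0$; a curve is lightlike if its velocity is lightlike everywhere. For a constant vector $Z$, $Z=Z^\top+Z^\perp$ along $M$; $M$ has a canonical null direction with respect to $Z$ if $Z^\top$ is lightlike everywhere on $M$. $M$ is minimal if its mean curvature vector $\frac12\operatorname{tr}II$ vanishes. *)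

theory Defs
  imports "HOL-Analysis.Analysis"
begin

definition mink :: "real^4 \<Rightarrow> real^4 \<Rightarrow> real" where
  "mink v w = - (v$1 * w$1) + v$2 * w$2 + v$3 * w$3 + v$4 * w$4"

definition lightlike :: "real^4 \<Rightarrow> bool" where
  "lightlike v \<longleftrightarrow> v \<noteq> 0 \<and> mink v v = 0"

definition e3 :: "real^4" where "e3 = axis 3 1"
definition e4 :: "real^4" where "e4 = axis 4 1"

definition px :: "(real \<times> real \<Rightarrow> 'a::real_normed_vector) \<Rightarrow> real \<times> real \<Rightarrow> 'a" where
  "px F p = vector_derivative (\<lambda>t. F (t, snd p)) (at (fst p))"

definition py :: "(real \<times> real \<Rightarrow> 'a::real_normed_vector) \<Rightarrow> real \<times> real \<Rightarrow> 'a" where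
  "py F p = vector_derivative (\<lambda>t. F (fst p, t)) (at (snd p))"

fun Ck :: "nat \<Rightarrow> (real \<times> real) set \<Rightarrow> (real \<times> real \<Rightarrow> real) \<Rightarrow> bool" where
  "Ck 0 U f = continuous_on U f"
| "Ck (Suc k) U f =
     (continuous_on U f \<and>
      (\<forall>p\<in>U. (\<lambda>t. f (t, snd p)) differentiable (at (fst p))
            \<and> (\<lambda>t. f (fst p, t)) differentiable (at (snd p))) \<and>
      Ck k U (px f) \<and> Ck k U (py f))"

definition smooth_on2 :: "(real \<times> real) set \<Rightarrow> (real \<times> real \<Rightarrow> real) \<Rightarrow> bool" where
  "smooth_on2 U f \<longleftrightarrow> (\<forall>k. Ck k U f)"

definition fE :: "(real \<times> real \<Rightarrow> real^4) \<Rightarrow> real \<times> real \<Rightarrow> real" where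
  "fE \<Psi> p = mink (px \<Psi> p) (px \<Psi> p)"
definition fF :: "(real \<times> real \<Rightarrow> real^4) \<Rightarrow> real \<times> real \<Rightarrow> real" where
  "fF \<Psi> p = mink (px \<Psi> p) (py \<Psi> p)"
definition fG :: "(real \<times> real \<Rightarrow> real^4) \<Rightarrow> real \<times> real \<Rightarrow> real" where
  "fG \<Psi> p = mink (py \<Psi> p) (py \<Psi> p)"

definition timelike_surface :: "(real \<times> real) set \<Rightarrow> (real \<times> real \<Rightarrow> real^4) \<Rightarrow> bool" where
  "timelike_surface U \<Psi> \<longleftrightarrow> (\<forall>p\<in>U. fE \<Psi> p * fG \<Psi> p - (fF \<Psi> p)^2 < 0)"

text \<open>Tangential part of a vector v at the point \<Psi> p (orthogonal projection w.r.t. the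
  Minkowski metric onto the nondegenerate tangent plane), and normal part.\<close>
definition tang :: "(real \<times> real \<Rightarrow> real^4) \<Rightarrow> real \<times> real \<Rightarrow> real^4 \<Rightarrow> real^4" where
  "tang \<Psi> p v =
     (let E = fE \<Psi> p; F = fF \<Psi> p; G = fG \<Psi> p; D = E * G - F^2;
          a1 = mink v (px \<Psi> p); a2 = mink v (py \<Psi> p)
      in ((G * a1 - F * a2) / D) *\<^sub>R px \<Psi> p + ((E * a2 - F * a1) / D) *\<^sub>R py \<Psi> p)"

definition nor :: "(real \<times> real \<Rightarrow> real^4) \<Rightarrow> real \<times> real \<Rightarrow> real^4 \<Rightarrow> real^4" where
  "nor \<Psi> p v = v - tang \<Psi> p v"

text \<open>Mean curvature vector H = (1/2) tr II, with II(X,Y) = normal part of D_X Y.\<close>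
definition mean_curv_vec :: "(real \<times> real \<Rightarrow> real^4) \<Rightarrow> real \<times> real \<Rightarrow> real^4" where
  "mean_curv_vec \<Psi> p =
     (let E = fE \<Psi> p; F = fF \<Psi> p; G = fG \<Psi> p; D = E * G - F^2
      in (1/2) *\<^sub>R ((1 / D) *\<^sub>R
           (G *\<^sub>R nor \<Psi> p (px (px \<Psi>) p) - (2 * F) *\<^sub>R nor \<Psi> p (py (px \<Psi>) p)
            + E *\<^sub>R nor \<Psi> p (py (py \<Psi>) p))))"

definition minimal_surface :: "(real \<times> real) set \<Rightarrow> (real \<times> real \<Rightarrow> real^4) \<Rightarrow> bool" where
  "minimal_surface U \<Psi> \<longleftrightarrow> (\<forall>p\<in>U. mean_curv_vec \<Psi> p = 0)"

definition canonical_null_direction ::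
  "(real \<times> real) set \<Rightarrow> (real \<times> real \<Rightarrow> real^4) \<Rightarrow> real^4 \<Rightarrow> bool" where
  "canonical_null_direction U \<Psi> Z \<longleftrightarrow> (\<forall>p\<in>U. lightlike (tang \<Psi> p Z))"

definition graph_surf :: "(real \<times> real \<Rightarrow> real) \<Rightarrow> (real \<times> real \<Rightarrow> real) \<Rightarrow> real \<times> real \<Rightarrow> real^4" where
  "graph_surf f g = (\<lambda>(x, y). vector [f (x, y), g (x, y), x, y])"

definition lightlike_curve_at :: "(real \<Rightarrow> real^4) \<Rightarrow> real \<Rightarrow> bool" where
  "lightlike_curve_at \<alpha> t \<longleftrightarrow> (\<exists>v. (\<alpha> has_vector_derivative v) (at t) \<and> lightlike v)"

end

theory Submission imports Defs begin

text \<open>For the graph \<open>\<Psi>(x,y) = (f,g,x,y)\<close> we have \<open>\<langle>\<Psi>\<^sub>x,e\<^sub>3\<rangle> = 1\<close>, \<open>\<langle>\<Psi>\<^sub>y,e\<^sub>3\<rangle> = 0\<close>,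
  and symmetrically for \<open>e\<^sub>4\<close>. Hence \<open>\<langle>e\<^sub>3\<^sup>\<top>,e\<^sub>3\<^sup>\<top>\<rangle> = G/(EG - F\<^sup>2)\<close> and
  \<open>\<langle>e\<^sub>4\<^sup>\<top>,e\<^sub>4\<^sup>\<top>\<rangle> = E/(EG - F\<^sup>2)\<close>, so the two canonical null directions say exactly that
  \<open>E = G = 0\<close>: \<open>(x,y)\<close> are null coordinates. In null coordinates the mean curvature
  vector is \<open>(\<Psi>\<^sub>x\<^sub>y)\<^sup>\<perp>/F\<close>, and since \<open>\<Psi>\<^sub>x\<^sub>y = (f\<^sub>x\<^sub>y, g\<^sub>x\<^sub>y, 0, 0)\<close> has no component along the
  last two coordinates, which detect the tangent plane, \<open>H = 0\<close> iff \<open>f\<^sub>x\<^sub>y = g\<^sub>x\<^sub>y = 0\<close>.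
  That is equivalent to \<open>\<Psi>\<close> splitting locally as \<open>\<alpha>(x) + \<beta>(y)\<close>, and the slice curves
  \<open>\<alpha>, \<beta>\<close> are lightlike because \<open>E = G = 0\<close>.\<close>

lemma vector4_nth [simp]:
  "(vector [a,b,c,d] :: ('a::zero)^4)$1 = a"
  "(vector [a,b,c,d] :: ('a::zero)^4)$2 = b"
  "(vector [a,b,c,d] :: ('a::zero)^4)$3 = c"
  "(vector [a,b,c,d] :: ('a::zero)^4)$4 = d"
  unfolding vector_def by simp_all

lemma vector4_eq_axis_sum:
  "(vector [a,b,c,d] :: real^4) = a *\<^sub>R axis 1 1 + b *\<^sub>R axis 2 1 + c *\<^sub>R axis 3 1 + d *\<^sub>R axis 4 1"
  by (simp add: vec_eq_iff forall_4 axis_def)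

lemma vector4_has_vector_derivative:
  assumes "(a has_field_derivative a') (at t)" "(b has_field_derivative b') (at t)"
    "(c has_field_derivative c') (at t)" "(d has_field_derivative d') (at t)"
  shows "((\<lambda>t. vector [a t, b t, c t, d t] :: real^4) has_vector_derivative vector [a', b', c', d']) (at t)"
  unfolding vector4_eq_axis_sum
  by (rule derivative_eq_intros assms | simp)+

lemma mink_e3 [simp]: "mink v e3 = v$3" "mink e3 v = v$3"
  by (simp_all add: mink_def e3_def axis_def)

lemma mink_e4 [simp]: "mink v e4 = v$4" "mink e4 v = v$4"
  by (simp_all add: mink_def e4_def axis_def)

lemma mink_zero [simp]: "mink 0 v = 0" "mink v 0 = 0"
  by (simp_all add: mink_def)

lemma mink_combination_self:
  "mink (a *\<^sub>R u + b *\<^sub>R v) (a *\<^sub>R u + b *\<^sub>R v) = a^2 * mink u u + 2*a*b * mink u v + b^2 * mink v v"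
  by (simp add: mink_def algebra_simps power2_eq_square)

lemma has_field_derivative_px:
  assumes "Ck (Suc k) U h" "q \<in> U"
  shows "((\<lambda>t. h (t, snd q)) has_field_derivative px h q) (at (fst q))"
proof -
  have "(\<lambda>t. h (t, snd q)) differentiable (at (fst q))" using assms by auto
  then show ?thesis
    unfolding px_def has_real_derivative_iff_has_vector_derivative
    by (simp add: vector_derivative_works[symmetric])
qed

lemma has_field_derivative_py:
  assumes "Ck (Suc k) U h" "q \<in> U"
  shows "((\<lambda>t. h (fst q, t)) has_field_derivative py h q) (at (snd q))"
proof -
  have "(\<lambda>t. h (fst q, t)) differentiable (at (snd q))" using assms by auto
  then show ?thesis
    unfolding py_def has_real_derivative_iff_has_vector_derivative
    by (simp add: vector_derivative_works[symmetric])
qed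

lemma vector_derivative_cong_shift:
  fixes g1 g2 :: "real \<Rightarrow> 'a::real_normed_vector"
  assumes "open S" "x \<in> S" "\<forall>s\<in>S. g1 s = g2 s + c"
  shows "vector_derivative g1 (at x) = vector_derivative g2 (at x)"
proof -
  have "(g1 has_vector_derivative D) (at x) \<longleftrightarrow> (g2 has_vector_derivative D) (at x)" for D
  proof
    assume "(g1 has_vector_derivative D) (at x)"
    then have "((\<lambda>s. g1 s + (- c)) has_vector_derivative D) (at x)"
      by (simp only: has_vector_derivative_add_const)
    then show "(g2 has_vector_derivative D) (at x)"
      by (rule has_vector_derivative_transform_within_open[OF _ assms(1,2)]) (use assms(3) in auto)
  next
    assume "(g2 has_vector_derivative D) (at x)"
    then have "((\<lambda>s. g2 s + c) has_vector_derivative D) (at x)"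
      by (simp only: has_vector_derivative_add_const)
    then show "(g1 has_vector_derivative D) (at x)"
      by (rule has_vector_derivative_transform_within_open[OF _ assms(1,2)]) (use assms(3) in auto)
  qed
  then show ?thesis unfolding vector_derivative_def by simp
qed

lemma open_contains_ball_Times:
  fixes p :: "real \<times> real"
  assumes "open U" "p \<in> U"
  obtains r1 r2 where "r1 > 0" "r2 > 0" "ball (fst p) r1 \<times> ball (snd p) r2 \<subseteq> U"
proof -
  obtain A B where AB: "open A" "open B" "p \<in> A \<times> B" "A \<times> B \<subseteq> U"
    using open_prod_elim[OF assms] by blast
  obtain r1 where "r1 > 0" "ball (fst p) r1 \<subseteq> A"
    using AB(1,3) open_contains_ball by (metis mem_Times_iff)
  moreover obtain r2 where "r2 > 0" "ball (snd p) r2 \<subseteq> B"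
    using AB(2,3) open_contains_ball by (metis mem_Times_iff)
  ultimately show thesis using that AB(4) by blast
qed

lemma zero_mixed_partial_imp_sum_of_slices:
  assumes "Ck (Suc (Suc k)) U h" "I \<times> J \<subseteq> U" "convex I" "convex J" "x0 \<in> I" "y0 \<in> J"
    and mixed: "\<forall>q\<in>U. py (px h) q = 0" and "x \<in> I" "y \<in> J"
  shows "h (x, y) = h (x, y0) + h (x0, y) - h (x0, y0)"
proof -
  have h1: "Ck (Suc k) U (px h)" using assms(1) by simp
  have px_const: "px h (s, t) = px h (s, y0)" if "s \<in> I" "t \<in> J" for s t
  proof -
    have "\<exists>c. \<forall>t\<in>J. px h (s, t) = c"
    proof (rule has_field_derivative_zero_constant[OF assms(4)])
      fix t assume "t \<in> J"
      then have q: "(s, t) \<in> U" using assms(2) \<open>s \<in> I\<close> by auto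
      show "((\<lambda>t. px h (s, t)) has_field_derivative 0) (at t within J)"
        using has_field_derivative_py[OF h1 q] mixed q by (auto intro: has_field_derivative_at_within)
    qed
    then show ?thesis using that assms(6) by metis
  qed
  have "\<exists>c. \<forall>s\<in>I. h (s, y) - h (s, y0) = c"
  proof (rule has_field_derivative_zero_constant[OF assms(3)])
    fix s assume s: "s \<in> I"
    then have q: "(s, y) \<in> U" "(s, y0) \<in> U" using assms(2,6,9) by auto
    have "((\<lambda>s. h (s, y) - h (s, y0)) has_field_derivative px h (s, y) - px h (s, y0)) (at s)"
      using has_field_derivative_px[OF assms(1) q(1)] has_field_derivative_px[OF assms(1) q(2)]
      by (auto intro: derivative_intros)
    then show "((\<lambda>s. h (s, y) - h (s, y0)) has_field_derivative 0) (at s within I)"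
      using px_const[OF s assms(9)] by (auto intro: has_field_derivative_at_within)
  qed
  then have "h (x, y) - h (x, y0) = h (x0, y) - h (x0, y0)" using assms(5,8) by metis
  then show ?thesis by simp
qed

lemma py_px_eq_0_of_sum:
  fixes \<Psi> :: "real \<times> real \<Rightarrow> 'a::real_normed_vector"
  assumes "open V" "p \<in> V" "\<forall>x y. (x, y) \<in> V \<longrightarrow> \<Psi> (x, y) = \<alpha> x + \<beta> y"
  shows "py (px \<Psi>) p = 0"
proof -
  obtain A B where AB: "open A" "open B" "p \<in> A \<times> B" "A \<times> B \<subseteq> V"
    using open_prod_elim[OF assms(1,2)] by blast
  have px_const: "px \<Psi> (fst p, t) = px \<Psi> p" if "t \<in> B" for t
  proof -
    have "px \<Psi> (fst p, t) = vector_derivative (\<lambda>s. \<Psi> (s, t)) (at (fst p))"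
      by (simp add: px_def)
    also have "\<dots> = vector_derivative (\<lambda>s. \<Psi> (s, snd p)) (at (fst p))"
    proof (rule vector_derivative_cong_shift[OF AB(1), where c = "\<beta> t - \<beta> (snd p)"])
      show "fst p \<in> A" using AB(3) by auto
      have "(s, t) \<in> V \<and> (s, snd p) \<in> V" if "s \<in> A" for s
        using AB(3,4) \<open>t \<in> B\<close> that by (auto simp: mem_Times_iff)
      then show "\<forall>s\<in>A. \<Psi> (s, t) = \<Psi> (s, snd p) + (\<beta> t - \<beta> (snd p))"
        using assms(3) by simp
    qed
    also have "\<dots> = px \<Psi> p" by (simp add: px_def)
    finally show ?thesis .
  qed
  have "py (px \<Psi>) p = vector_derivative (\<lambda>t. px \<Psi> (fst p, t)) (at (snd p))"
    by (simp add: py_def)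
  also have "\<dots> = vector_derivative (\<lambda>t. 0) (at (snd p))"
    by (rule vector_derivative_cong_shift[OF AB(2), where c = "px \<Psi> p"]) (use AB(3) px_const in auto)
  also have "\<dots> = 0" by (rule vector_derivative_at) (rule has_vector_derivative_const)
  finally show ?thesis .
qed

lemma lightlike_tang_imp_fG_eq_0:
  assumes "px \<Psi> p $ 3 = 1" "py \<Psi> p $ 3 = 0" "fE \<Psi> p * fG \<Psi> p - (fF \<Psi> p)^2 < 0"
    "lightlike (tang \<Psi> p e3)"
  shows "fG \<Psi> p = 0"
proof -
  define E F G where "E = fE \<Psi> p" and "F = fF \<Psi> p" and "G = fG \<Psi> p"
  define D where "D = E * G - F^2"
  have D: "D \<noteq> 0" using assms(3) unfolding D_def E_def F_def G_def by simp
  have key: "G*G*E - 2*G*F*F + F*F*G = G * D" by (simp add: D_def algebra_simps power2_eq_square)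
  have T: "tang \<Psi> p e3 = (G / D) *\<^sub>R px \<Psi> p + (- F / D) *\<^sub>R py \<Psi> p"
    using assms(1,2) by (simp add: tang_def Let_def E_def F_def G_def D_def)
  have "mink (tang \<Psi> p e3) (tang \<Psi> p e3) = G / D"
    unfolding T mink_combination_self using D
    by (simp add: E_def[symmetric] F_def[symmetric] G_def[symmetric] fE_def[symmetric] fF_def[symmetric] fG_def[symmetric])
      (simp add: field_simps power2_eq_square key, simp add: D_def algebra_simps power2_eq_square)
  then show ?thesis using assms(4) D unfolding lightlike_def G_def by simp
qed

lemma lightlike_tang_imp_fE_eq_0:
  assumes "px \<Psi> p $ 4 = 0" "py \<Psi> p $ 4 = 1" "fE \<Psi> p * fG \<Psi> p - (fF \<Psi> p)^2 < 0"
    "lightlike (tang \<Psi> p e4)"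
  shows "fE \<Psi> p = 0"
proof -
  define E F G where "E = fE \<Psi> p" and "F = fF \<Psi> p" and "G = fG \<Psi> p"
  define D where "D = E * G - F^2"
  have D: "D \<noteq> 0" using assms(3) unfolding D_def E_def F_def G_def by simp
  have key: "F*F*E - 2*E*F*F + E*E*G = E * D" by (simp add: D_def algebra_simps power2_eq_square)
  have T: "tang \<Psi> p e4 = (- F / D) *\<^sub>R px \<Psi> p + (E / D) *\<^sub>R py \<Psi> p"
    using assms(1,2) by (simp add: tang_def Let_def E_def F_def G_def D_def)
  have "mink (tang \<Psi> p e4) (tang \<Psi> p e4) = E / D"
    unfolding T mink_combination_self using D
    by (simp add: E_def[symmetric] F_def[symmetric] G_def[symmetric] fE_def[symmetric] fF_def[symmetric] fG_def[symmetric])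
      (simp add: field_simps power2_eq_square key, simp add: D_def algebra_simps power2_eq_square)
  then show ?thesis using assms(4) D unfolding lightlike_def E_def by simp
qed

lemma mean_curv_vec_eq_0_iff_null_coordinates:
  assumes "px \<Psi> p $ 3 = 1" "py \<Psi> p $ 3 = 0" "px \<Psi> p $ 4 = 0" "py \<Psi> p $ 4 = 1"
    "fE \<Psi> p * fG \<Psi> p - (fF \<Psi> p)^2 < 0" "fE \<Psi> p = 0" "fG \<Psi> p = 0"
    "py (px \<Psi>) p $ 3 = 0" "py (px \<Psi>) p $ 4 = 0"
  shows "mean_curv_vec \<Psi> p = 0 \<longleftrightarrow> py (px \<Psi>) p = 0"
proof -
  define F where "F = fF \<Psi> p"
  define w where "w = py (px \<Psi>) p"
  have F: "F \<noteq> 0" using assms(5-7) unfolding F_def by auto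
  have H: "mean_curv_vec \<Psi> p = (1 / F) *\<^sub>R nor \<Psi> p w"
    using F assms(6,7) unfolding mean_curv_vec_def Let_def F_def[symmetric] w_def[symmetric]
    by (simp add: power2_eq_square field_simps)
  show ?thesis
  proof
    assume "mean_curv_vec \<Psi> p = 0"
    then have "w = tang \<Psi> p w" using H F unfolding nor_def by simp
    moreover obtain c1 c2 where "tang \<Psi> p w = c1 *\<^sub>R px \<Psi> p + c2 *\<^sub>R py \<Psi> p"
      unfolding tang_def Let_def by blast
    ultimately have w: "w = c1 *\<^sub>R px \<Psi> p + c2 *\<^sub>R py \<Psi> p" by simp
    then have "w $ 3 = c1" "w $ 4 = c2" by (simp_all add: assms(1-4))
    then have "c1 = 0" "c2 = 0" using assms(8,9) unfolding w_def by auto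
    then show "py (px \<Psi>) p = 0" using w unfolding w_def by simp
  next
    assume "py (px \<Psi>) p = 0"
    then show "mean_curv_vec \<Psi> p = 0" unfolding H w_def by (simp add: nor_def tang_def Let_def)
  qed
qed

lemma graph_surf_eq: "graph_surf f g (x, y) = vector [f (x, y), g (x, y), x, y]"
  by (simp add: graph_surf_def)

lemma has_vector_derivative_graph_surf_x:
  assumes "Ck (Suc k) U f" "Ck (Suc k') U g" "q \<in> U"
  shows "((\<lambda>t. graph_surf f g (t, snd q)) has_vector_derivative vector [px f q, px g q, 1, 0]) (at (fst q))"
  unfolding graph_surf_eq
  by (rule vector4_has_vector_derivative has_field_derivative_px[OF assms(1,3)]
      has_field_derivative_px[OF assms(2,3)] derivative_eq_intros refl)+

lemma has_vector_derivative_graph_surf_y: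
  assumes "Ck (Suc k) U f" "Ck (Suc k') U g" "q \<in> U"
  shows "((\<lambda>t. graph_surf f g (fst q, t)) has_vector_derivative vector [py f q, py g q, 0, 1]) (at (snd q))"
  unfolding graph_surf_eq
  by (rule vector4_has_vector_derivative has_field_derivative_py[OF assms(1,3)]
      has_field_derivative_py[OF assms(2,3)] derivative_eq_intros refl)+

lemma px_graph_surf:
  assumes "Ck (Suc k) U f" "Ck (Suc k') U g" "q \<in> U"
  shows "px (graph_surf f g) q = vector [px f q, px g q, 1, 0]"
  using vector_derivative_at[OF has_vector_derivative_graph_surf_x[OF assms]] by (simp add: px_def)

lemma py_graph_surf:
  assumes "Ck (Suc k) U f" "Ck (Suc k') U g" "q \<in> U"
  shows "py (graph_surf f g) q = vector [py f q, py g q, 0, 1]"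
  using vector_derivative_at[OF has_vector_derivative_graph_surf_y[OF assms]] by (simp add: py_def)

lemma py_px_graph_surf:
  assumes "open U" "Ck (Suc (Suc k)) U f" "Ck (Suc (Suc k')) U g" "q \<in> U"
  shows "py (px (graph_surf f g)) q = vector [py (px f) q, py (px g) q, 0, 0]"
proof -
  have f1: "Ck (Suc k) U (px f)" and g1: "Ck (Suc k') U (px g)" using assms(2,3) by auto
  have d: "((\<lambda>t. vector [px f (fst q, t), px g (fst q, t), 1, 0] :: real^4) has_vector_derivative
      vector [py (px f) q, py (px g) q, 0, 0]) (at (snd q))"
    by (rule vector4_has_vector_derivative has_field_derivative_py[OF f1 assms(4)]
        has_field_derivative_py[OF g1 assms(4)] derivative_eq_intros refl)+
  have "open (Pair (fst q) -` U)"
    using assms(1) by (intro open_vimage) (auto intro!: continuous_intros)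
  then have "((\<lambda>t. px (graph_surf f g) (fst q, t)) has_vector_derivative
      vector [py (px f) q, py (px g) q, 0, 0]) (at (snd q))"
    by (rule has_vector_derivative_transform_within_open[OF d])
      (use assms(4) px_graph_surf[OF assms(2,3)] in auto)
  then show ?thesis unfolding py_def by (rule vector_derivative_at)
qed

lemma graph_surf_null_coordinates:
  assumes "Ck (Suc k) U f" "Ck (Suc k') U g" "timelike_surface U (graph_surf f g)"
    "canonical_null_direction U (graph_surf f g) e3"
    "canonical_null_direction U (graph_surf f g) e4" "q \<in> U"
  shows "fE (graph_surf f g) q = 0 \<and> fG (graph_surf f g) q = 0"
proof -
  note derivs = px_graph_surf[OF assms(1,2,6)] py_graph_surf[OF assms(1,2,6)]
  have "fE (graph_surf f g) q * fG (graph_surf f g) q - (fF (graph_surf f g) q)^2 < 0"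
    using assms(3,6) unfolding timelike_surface_def by blast
  with derivs assms(4-6) show ?thesis
    unfolding canonical_null_direction_def
    by (auto intro: lightlike_tang_imp_fE_eq_0 lightlike_tang_imp_fG_eq_0)
qed

lemma minimal_surface_graph_surf_iff:
  assumes "open U" "Ck (Suc (Suc k)) U f" "Ck (Suc (Suc k')) U g"
    "timelike_surface U (graph_surf f g)"
    "\<forall>q\<in>U. fE (graph_surf f g) q = 0 \<and> fG (graph_surf f g) q = 0"
  shows "minimal_surface U (graph_surf f g) \<longleftrightarrow> (\<forall>q\<in>U. py (px (graph_surf f g)) q = 0)"
proof -
  have "mean_curv_vec (graph_surf f g) q = 0 \<longleftrightarrow> py (px (graph_surf f g)) q = 0" if "q \<in> U" for q
    using px_graph_surf[OF assms(2,3) that] py_graph_surf[OF assms(2,3) that]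
      py_px_graph_surf[OF assms(1-3) that] assms(4,5) that
    by (intro mean_curv_vec_eq_0_iff_null_coordinates) (auto simp: timelike_surface_def)
  then show ?thesis unfolding minimal_surface_def by blast
qed

lemma lightlike_curve_at_x_slice:
  assumes "(\<lambda>t. \<Psi> (t, y)) differentiable (at x)" "fE \<Psi> (x, y) = 0" "px \<Psi> (x, y) \<noteq> 0"
  shows "lightlike_curve_at (\<lambda>t. \<Psi> (t, y) - c) x"
proof -
  have "((\<lambda>t. \<Psi> (t, y) - c) has_vector_derivative px \<Psi> (x, y)) (at x)"
    using has_vector_derivative_diff[OF vector_derivative_works[THEN iffD1, OF assms(1)]
        has_vector_derivative_const[of c]]
    by (simp add: px_def)
  with assms(2,3) show ?thesis unfolding lightlike_curve_at_def lightlike_def fE_def by blast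
qed

lemma lightlike_curve_at_y_slice:
  assumes "(\<lambda>t. \<Psi> (x, t)) differentiable (at y)" "fG \<Psi> (x, y) = 0" "py \<Psi> (x, y) \<noteq> 0"
  shows "lightlike_curve_at (\<lambda>t. \<Psi> (x, t) - c) y"
proof -
  have "((\<lambda>t. \<Psi> (x, t) - c) has_vector_derivative py \<Psi> (x, y)) (at y)"
    using has_vector_derivative_diff[OF vector_derivative_works[THEN iffD1, OF assms(1)]
        has_vector_derivative_const[of c]]
    by (simp add: py_def)
  with assms(2,3) show ?thesis unfolding lightlike_curve_at_def lightlike_def fG_def by blast
qed

lemma graph_surf_sum_of_slices:
  assumes "open U" "Ck (Suc (Suc k)) U f" "Ck (Suc (Suc k')) U g"
    and mixed: "\<forall>q\<in>U. py (px (graph_surf f g)) q = 0"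
    and "I \<times> J \<subseteq> U" "convex I" "convex J" "x0 \<in> I" "y0 \<in> J" "x \<in> I" "y \<in> J"
  shows "graph_surf f g (x, y) = graph_surf f g (x, y0) + graph_surf f g (x0, y) - graph_surf f g (x0, y0)"
proof -
  have mixed_fg: "\<forall>q\<in>U. py (px f) q = 0" "\<forall>q\<in>U. py (px g) q = 0"
    using mixed py_px_graph_surf[OF assms(1-3)] by (simp_all add: vec_eq_iff forall_4)
  show ?thesis
    using zero_mixed_partial_imp_sum_of_slices[OF assms(2) assms(5-9) mixed_fg(1) assms(10,11)]
      zero_mixed_partial_imp_sum_of_slices[OF assms(3) assms(5-9) mixed_fg(2) assms(10,11)]
    by (simp add: graph_surf_eq vec_eq_iff forall_4)
qed

definition lightlike_translation_chart ::
  "(real \<times> real) set \<Rightarrow> (real \<times> real \<Rightarrow> real^4) \<Rightarrow> (real \<Rightarrow> real^4) \<Rightarrow> (real \<Rightarrow> real^4) \<Rightarrow> bool"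
  where "lightlike_translation_chart V \<Psi> \<alpha> \<beta> \<longleftrightarrow>
    (\<forall>x y. (x, y) \<in> V \<longrightarrow> \<Psi> (x, y) = \<alpha> x + \<beta> y) \<and>
    (\<forall>x\<in>fst ` V. lightlike_curve_at \<alpha> x) \<and> (\<forall>y\<in>snd ` V. lightlike_curve_at \<beta> y) \<and>
    (\<exists>c. \<forall>x\<in>fst ` V. mink (\<alpha> x) e4 = c) \<and> (\<exists>c. \<forall>y\<in>snd ` V. mink (\<beta> y) e3 = c)"

lemma graph_surf_lightlike_translation_chart:
  assumes "open U" "Ck (Suc (Suc k)) U f" "Ck (Suc (Suc k')) U g"
    and null: "\<forall>q\<in>U. fE (graph_surf f g) q = 0 \<and> fG (graph_surf f g) q = 0"
    and mixed: "\<forall>q\<in>U. py (px (graph_surf f g)) q = 0" and "p \<in> U"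
  obtains V \<alpha> \<beta> where "open V" "p \<in> V" "V \<subseteq> U" "lightlike_translation_chart V (graph_surf f g) \<alpha> \<beta>"
proof -
  define \<Psi> where "\<Psi> = graph_surf f g"
  obtain x0 y0 where p: "p = (x0, y0)" by fastforce
  obtain r1 r2 where "r1 > 0" "r2 > 0" and balls: "ball x0 r1 \<times> ball y0 r2 \<subseteq> U"
    using open_contains_ball_Times[OF assms(1,6)] p by auto
  define I J where "I = ball x0 r1" and "J = ball y0 r2"
  have IJ: "I \<times> J \<subseteq> U" "open (I \<times> J)" "convex I" "convex J"
    using balls by (simp_all add: I_def J_def open_Times)
  have x0: "x0 \<in> I" and y0: "y0 \<in> J" using \<open>r1 > 0\<close> \<open>r2 > 0\<close> by (simp_all add: I_def J_def)
  define \<alpha> where "\<alpha> = (\<lambda>t. \<Psi> (t, y0) - y0 *\<^sub>R e4)"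
  define \<beta> where "\<beta> = (\<lambda>t. \<Psi> (x0, t) - (\<Psi> (x0, y0) - y0 *\<^sub>R e4))"
  have "fst ` (I \<times> J) = I" "snd ` (I \<times> J) = J" using x0 y0 by auto
  have "lightlike_translation_chart (I \<times> J) \<Psi> \<alpha> \<beta>"
    unfolding lightlike_translation_chart_def \<open>fst ` (I \<times> J) = I\<close> \<open>snd ` (I \<times> J) = J\<close>
  proof (intro conjI ballI allI impI exI)
    fix x y assume "(x, y) \<in> I \<times> J"
    then have "x \<in> I" "y \<in> J" by simp_all
    from graph_surf_sum_of_slices[OF assms(1-3) mixed IJ(1,3,4) x0 y0 this]
    show "\<Psi> (x, y) = \<alpha> x + \<beta> y"
      by (simp add: \<Psi>_def \<alpha>_def \<beta>_def algebra_simps)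
  next
    fix x assume "x \<in> I"
    then have q: "(x, y0) \<in> U" using IJ(1) y0 by auto
    show "lightlike_curve_at \<alpha> x" unfolding \<alpha>_def \<Psi>_def
      using has_vector_derivative_graph_surf_x[OF assms(2,3) q] null q px_graph_surf[OF assms(2,3) q]
      by (intro lightlike_curve_at_x_slice[where \<Psi> = "graph_surf f g"])
        (auto simp: differentiableI_vector vec_eq_iff intro: exI[of _ 3])
    show "mink (\<alpha> x) e4 = 0" by (simp add: \<alpha>_def \<Psi>_def graph_surf_eq) (simp add: e4_def)
  next
    fix y assume "y \<in> J"
    then have q: "(x0, y) \<in> U" using IJ(1) x0 by auto
    show "lightlike_curve_at \<beta> y" unfolding \<beta>_def \<Psi>_def
      using has_vector_derivative_graph_surf_y[OF assms(2,3) q] null q py_graph_surf[OF assms(2,3) q]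
      by (intro lightlike_curve_at_y_slice[where \<Psi> = "graph_surf f g"])
        (auto simp: differentiableI_vector vec_eq_iff intro: exI[of _ 4])
    show "mink (\<beta> y) e3 = 0" by (simp add: \<beta>_def \<Psi>_def graph_surf_eq) (simp add: e4_def axis_def)
  qed
  moreover have "p \<in> I \<times> J" using p x0 y0 by simp
  ultimately show thesis using that IJ(1,2) unfolding \<Psi>_def by blast
qed

theorem mainTheorem17:
  fixes U :: "(real \<times> real) set" and f g :: "real \<times> real \<Rightarrow> real"
  assumes "open U"
    and "smooth_on2 U f" and "smooth_on2 U g"
    and "timelike_surface U (graph_surf f g)"
    and "canonical_null_direction U (graph_surf f g) e3"
    and "canonical_null_direction U (graph_surf f g) e4"
  shows "minimal_surface U (graph_surf f g) \<longleftrightarrow>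
    (\<forall>p\<in>U. \<exists>V \<alpha> \<beta>. open V \<and> p \<in> V \<and> V \<subseteq> U \<and>
       (\<forall>x y. (x, y) \<in> V \<longrightarrow> graph_surf f g (x, y) = \<alpha> x + \<beta> y) \<and>
       (\<forall>x\<in>fst ` V. lightlike_curve_at \<alpha> x) \<and>
       (\<forall>y\<in>snd ` V. lightlike_curve_at \<beta> y) \<and>
       (\<exists>c. \<forall>x\<in>fst ` V. mink (\<alpha> x) e4 = c) \<and>
       (\<exists>c. \<forall>y\<in>snd ` V. mink (\<beta> y) e3 = c))"
proof -
  have f2: "Ck (Suc (Suc 0)) U f" and g2: "Ck (Suc (Suc 0)) U g"
    using assms(2,3) unfolding smooth_on2_def by blast+
  have null: "\<forall>q\<in>U. fE (graph_surf f g) q = 0 \<and> fG (graph_surf f g) q = 0"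
    using graph_surf_null_coordinates[OF f2 g2 assms(4-6)] by blast
  have "minimal_surface U (graph_surf f g) \<longleftrightarrow> (\<forall>p\<in>U. \<exists>V \<alpha> \<beta>.
      open V \<and> p \<in> V \<and> V \<subseteq> U \<and> lightlike_translation_chart V (graph_surf f g) \<alpha> \<beta>)"
    unfolding minimal_surface_graph_surf_iff[OF assms(1) f2 g2 assms(4) null]
  proof (intro iffI ballI)
    fix p assume mixed: "\<forall>q\<in>U. py (px (graph_surf f g)) q = 0" and "p \<in> U"
    obtain V \<alpha> \<beta> where "open V" "p \<in> V" "V \<subseteq> U"
      "lightlike_translation_chart V (graph_surf f g) \<alpha> \<beta>"
      by (rule graph_surf_lightlike_translation_chart[OF assms(1) f2 g2 null mixed \<open>p \<in> U\<close>])
    then show "\<exists>V \<alpha> \<beta>. open V \<and> p \<in> V \<and> V \<subseteq> U \<and> lightlike_translation_chart V (graph_surf f g) \<alpha> \<beta>"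
      by blast
  next
    fix q assume "\<forall>p\<in>U. \<exists>V \<alpha> \<beta>.
      open V \<and> p \<in> V \<and> V \<subseteq> U \<and> lightlike_translation_chart V (graph_surf f g) \<alpha> \<beta>" "q \<in> U"
    then obtain V \<alpha> \<beta> where "open V" "q \<in> V" "lightlike_translation_chart V (graph_surf f g) \<alpha> \<beta>"
      by blast
    then show "py (px (graph_surf f g)) q = 0"
      by (intro py_px_eq_0_of_sum[where \<alpha> = \<alpha> and \<beta> = \<beta>]) (auto simp: lightlike_translation_chart_def)
  qed
  then show ?thesis unfolding lightlike_translation_chart_def .
qed

end
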